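(* Let $G=(V,E)$ be a finite graph satisfying the $CD\psi(n,-K)$ condition for some $n>0$, $K>0$, where $\psi:(0,+\infty)\to\mathbb R$ is a $C^1$ concave function with $\psi'(1)=0$. Let $\sigma\in\mathbb R$ and $c:[0,\infty)\to\mathbb R$ continuous with either ($c\ge0$, $\sigma\le1$) or ($c\le0$, $\sigma\ge1$), and let $u$ be a positive solution of $\partial_tu=\Delta u+c(t)u^\sigma$ on $V$. Fix $0<\alpha<1$. Then for all vertices and all $t>0$, $$(1-\alpha)\Gamma^\psi(u)\le\frac{n}{2(1-\alpha)t}+\frac{Kn}{2\alpha}.$$
   Context: Graphs: $G=(V,E)$ is a connected, locally finite graph; each edge $xy$ carries a weight $w_{xy}>0$ (possibly asymmetric), and $\mu:V\to(0,\infty)$ is a vertex measure; $y\sim x$ means $xy\in E$. Laplacian: $\Delta f(x)=\frac{1}{\mu(x)}\sum_{y\sim x}w_{xy}(f(y)-f(x))$. For $f:V\to(0,\infty)$: $\Delta^\psi f(x)=\Delta\big[\psi\big(\tfrac{f}{f(x)}\big)\big](x)$; $\overline\psi(s)=\psi'(1)(s-1)-(\psi(s)-\psi(1))$, $\Gamma^\psi f=\Delta^{\overline\psi}f$; $(\Omega^\psi f)(x)=\Delta\big[\psi'\big(\tfrac{f}{f(x)}\big)\tfrac{f}{f(x)}\big(\tfrac{\Delta f}{f}-\tfrac{\Delta f(x)}{f(x)}\big)\big](x)$; $2\Gamma_2^\psi(f)=\Omega^\psi f+\frac{\Delta f\,\Delta^\psi f}{f}-\frac{\Delta(f\Delta^\psi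 f)}{f}$. $CD\psi(n,K)$: for every $f:V\to(0,\infty)$ and every vertex, $\Gamma_2^\psi(f)\ge\frac1n(\Delta^\psi f)^2+K\Gamma^\psi(f)$. A positive solution $u:V\times[0,\infty)\to(0,\infty)$ is continuously differentiable in $t$; operators are applied to $u(\cdot,t)$ at each fixed time. *)

theory Defs
  imports "HOL-Analysis.Analysis"
begin

definition weighted_graph ::
  "'v set \<Rightarrow> ('v \<Rightarrow> 'v \<Rightarrow> bool) \<Rightarrow> ('v \<Rightarrow> 'v \<Rightarrow> real) \<Rightarrow> ('v \<Rightarrow> real) \<Rightarrow> bool" where
  "weighted_graph V E w mu \<longleftrightarrow>
     (\<forall>x y. E x y \<longrightarrow> x \<in> V \<and> y \<in> V) \<and>
     (\<forall>x y. E x y \<longrightarrow> E y x) \<and>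
     (\<forall>x y. E x y \<longrightarrow> w x y > 0) \<and>
     (\<forall>x\<in>V. mu x > 0) \<and>
     (\<forall>x\<in>V. \<forall>y\<in>V. (E\<^sup>*\<^sup>*) x y)"

definition lap ::
  "'v set \<Rightarrow> ('v \<Rightarrow> 'v \<Rightarrow> bool) \<Rightarrow> ('v \<Rightarrow> 'v \<Rightarrow> real) \<Rightarrow> ('v \<Rightarrow> real) \<Rightarrow> ('v \<Rightarrow> real) \<Rightarrow> 'v \<Rightarrow> real" where
  "lap V E w mu f x = (1 / mu x) * (\<Sum>y\<in>{y\<in>V. E x y}. w x y * (f y - f x))"

definition lap_psi ::
  "'v set \<Rightarrow> ('v \<Rightarrow> 'v \<Rightarrow> bool) \<Rightarrow> ('v \<Rightarrow> 'v \<Rightarrow> real) \<Rightarrow> ('v \<Rightarrow> real) \<Rightarrow> (real \<Rightarrow> real)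
     \<Rightarrow> ('v \<Rightarrow> real) \<Rightarrow> 'v \<Rightarrow> real" where
  "lap_psi V E w mu psi f x = lap V E w mu (\<lambda>y. psi (f y / f x)) x"

text \<open>\<open>\<psi>bar(s) = \<psi>'(1)(s-1) - (\<psi>(s) - \<psi>(1))\<close>, with \<open>psi'\<close> the derivative of \<open>psi\<close>.\<close>
definition psi_bar :: "(real \<Rightarrow> real) \<Rightarrow> (real \<Rightarrow> real) \<Rightarrow> real \<Rightarrow> real" where
  "psi_bar psi psi' s = psi' 1 * (s - 1) - (psi s - psi 1)"

definition Gamma_psi ::
  "'v set \<Rightarrow> ('v \<Rightarrow> 'v \<Rightarrow> bool) \<Rightarrow> ('v \<Rightarrow> 'v \<Rightarrow> real) \<Rightarrow> ('v \<Rightarrow> real) \<Rightarrow> (real \<Rightarrow> real)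
     \<Rightarrow> (real \<Rightarrow> real) \<Rightarrow> ('v \<Rightarrow> real) \<Rightarrow> 'v \<Rightarrow> real" where
  "Gamma_psi V E w mu psi psi' f x = lap_psi V E w mu (psi_bar psi psi') f x"

definition Omega_psi ::
  "'v set \<Rightarrow> ('v \<Rightarrow> 'v \<Rightarrow> bool) \<Rightarrow> ('v \<Rightarrow> 'v \<Rightarrow> real) \<Rightarrow> ('v \<Rightarrow> real) \<Rightarrow> (real \<Rightarrow> real)
     \<Rightarrow> ('v \<Rightarrow> real) \<Rightarrow> 'v \<Rightarrow> real" where
  "Omega_psi V E w mu psi' f x =
     lap V E w mu (\<lambda>y. psi' (f y / f x) * (f y / f x) *
        (lap V E w mu f y / f y - lap V E w mu f x / f x)) x"

definition Gamma2_psi ::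
  "'v set \<Rightarrow> ('v \<Rightarrow> 'v \<Rightarrow> bool) \<Rightarrow> ('v \<Rightarrow> 'v \<Rightarrow> real) \<Rightarrow> ('v \<Rightarrow> real) \<Rightarrow> (real \<Rightarrow> real)
     \<Rightarrow> (real \<Rightarrow> real) \<Rightarrow> ('v \<Rightarrow> real) \<Rightarrow> 'v \<Rightarrow> real" where
  "Gamma2_psi V E w mu psi psi' f x =
     (Omega_psi V E w mu psi' f x
      + lap V E w mu f x * lap_psi V E w mu psi f x / f x
      - lap V E w mu (\<lambda>y. f y * lap_psi V E w mu psi f y) x / f x) / 2"

definition CD_psi ::
  "'v set \<Rightarrow> ('v \<Rightarrow> 'v \<Rightarrow> bool) \<Rightarrow> ('v \<Rightarrow> 'v \<Rightarrow> real) \<Rightarrow> ('v \<Rightarrow> real) \<Rightarrow> (real \<Rightarrow> real)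
     \<Rightarrow> (real \<Rightarrow> real) \<Rightarrow> real \<Rightarrow> real \<Rightarrow> bool" where
  "CD_psi V E w mu psi psi' n K \<longleftrightarrow>
     (\<forall>f. (\<forall>y\<in>V. f y > 0) \<longrightarrow> (\<forall>x\<in>V.
        Gamma2_psi V E w mu psi psi' f x
          \<ge> (1 / n) * (lap_psi V E w mu psi f x)\<^sup>2 + K * Gamma_psi V E w mu psi psi' f x))"

end

theory Submission
  imports Defs
begin

text \<open>A maximum principle of Li--Yau type. Let \<open>F(x,s) = s \<Gamma>\<^sup>\<psi>(u)(x,s)\<close> attain its maximum
  over \<open>V \<times> [0,T]\<close> at \<open>(x,t)\<close>. There \<open>\<Gamma>\<^sup>\<psi>(u)\<close> is maximal in space, so the curvature condition
  bounds \<open>\<Omega>\<^sup>\<psi>\<close> below by \<open>(2/n) \<Gamma>\<^sup>2 - 2K\<Gamma>\<close>. Differentiating along the equation gives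
  \<open>\<partial>\<^sub>t \<Gamma>\<^sup>\<psi> \<le> -\<Omega>\<^sup>\<psi>\<close>: since \<open>\<psi>'\<close> is nonincreasing with \<open>\<psi>'(1) = 0\<close>, the reaction term
  \<open>c u\<^sup>\<sigma>\<close> only contributes with a favourable sign under the sign hypotheses on \<open>c\<close> and \<open>\<sigma>\<close>.
  Since \<open>F\<close> cannot decrease into its maximum, \<open>\<Gamma> + t \<partial>\<^sub>t \<Gamma> \<ge> 0\<close>, which forces
  \<open>t \<Gamma> \<le> n/2 + n K t\<close>; the stated bound is a weakening of this one.\<close>

lemma concave_on_below_tangent:
  fixes f :: "real \<Rightarrow> real"
  assumes "concave_on A f" "connected A" "c \<in> interior A" "x \<in> A"
    and "(f has_real_derivative f') (at c within A)"
  shows "f x - f c \<le> f' * (x - c)"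
  using convex_on_imp_above_tangent[of A "\<lambda>x. - f x" c x "- f'"] assms
  by (simp add: concave_on_def DERIV_minus)

lemma concave_on_deriv_antimono:
  fixes f f' :: "real \<Rightarrow> real"
  assumes conc: "concave_on {0<..} f"
    and deriv: "\<And>s. s > 0 \<Longrightarrow> (f has_real_derivative f' s) (at s)"
    and "r > 0" "s > 0"
  shows "(f' r - f' s) * (r - s) \<le> 0"
proof -
  have tangent: "f x - f y \<le> f' y * (x - y)" if "x > 0" "y > 0" for x y
  proof (rule concave_on_below_tangent[OF conc])
    show "connected {0::real<..}" by (simp add: convex_connected)
    show "y \<in> interior {0::real<..}" using that by (simp add: interior_open)
    show "x \<in> {0<..}" using that by simp
    show "(f has_real_derivative f' y) (at y within {0<..})"
      using deriv[OF \<open>y > 0\<close>] by (rule has_field_derivative_at_within)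
  qed
  from tangent[of r s] tangent[of s r] show ?thesis
    using assms by (simp add: algebra_simps)
qed

lemma reaction_rate_antimono:
  fixes a b c \<sigma> :: real
  assumes "a > 0" "b > 0" and sign: "(c \<ge> 0 \<and> \<sigma> \<le> 1) \<or> (c \<le> 0 \<and> \<sigma> \<ge> 1)"
  shows "c * (b powr (\<sigma> - 1) - a powr (\<sigma> - 1)) * (b - a) \<le> 0"
proof -
  have "(b powr (\<sigma> - 1) - a powr (\<sigma> - 1)) * (b - a) \<le> 0" if "\<sigma> \<le> 1"
    using that assms powr_mono2'[of "\<sigma> - 1" a b] powr_mono2'[of "\<sigma> - 1" b a]
    by (cases "a \<le> b") (auto simp: mult_nonpos_nonneg mult_nonneg_nonpos)
  moreover have "(b powr (\<sigma> - 1) - a powr (\<sigma> - 1)) * (b - a) \<ge> 0" if "\<sigma> \<ge> 1"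
    using that assms powr_mono2[of "\<sigma> - 1" a b] powr_mono2[of "\<sigma> - 1" b a]
    by (cases "a \<le> b") (auto simp: mult_nonpos_nonpos)
  ultimately show ?thesis
    using sign by (auto simp: mult.assoc mult_nonneg_nonpos mult_nonpos_nonneg)
qed

lemma deriv_nonneg_at_left_max:
  fixes f :: "real \<Rightarrow> real"
  assumes deriv: "(f has_real_derivative D) (at t within S)"
    and "a < t" "{a<..<t} \<subseteq> S" and max: "\<And>s. s \<in> {a<..<t} \<Longrightarrow> f s \<le> f t"
  shows "D \<ge> 0"
proof (rule tendsto_lowerbound)
  show "((\<lambda>s. (f s - f t) / (s - t)) \<longlongrightarrow> D) (at t within {a<..<t})"
    using deriv assms(3) unfolding has_field_derivative_iff by (rule tendsto_within_subset)
  show "\<forall>\<^sub>F s in at t within {a<..<t}. 0 \<le> (f s - f t) / (s - t)"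
    using max by (auto simp: eventually_at_filter divide_nonpos_neg)
  show "at t within {a<..<t} \<noteq> bot"
    using \<open>a < t\<close> by (simp add: at_within_eq_bot_iff)
qed

lemma continuous_family_attains_max:
  fixes f :: "'a \<Rightarrow> real \<Rightarrow> real"
  assumes "finite V" "V \<noteq> {}" "a \<le> b" and cont: "\<And>x. x \<in> V \<Longrightarrow> continuous_on {a..b} (f x)"
  obtains x0 t0 where "x0 \<in> V" "t0 \<in> {a..b}" "\<And>x t. x \<in> V \<Longrightarrow> t \<in> {a..b} \<Longrightarrow> f x t \<le> f x0 t0"
proof -
  let ?S = "\<Union>x\<in>V. f x ` {a..b}"
  have "compact ?S"
    by (rule compact_UN[OF \<open>finite V\<close>]) (rule compact_continuous_image[OF cont compact_Icc])
  moreover have "?S \<noteq> {}" using \<open>V \<noteq> {}\<close> \<open>a \<le> b\<close> by auto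
  ultimately obtain m where "m \<in> ?S" and m_max: "\<forall>y\<in>?S. y \<le> m"
    by (blast dest: compact_attains_sup)
  then obtain x0 t0 where "x0 \<in> V" "t0 \<in> {a..b}" "m = f x0 t0" by blast
  with m_max show ?thesis using that by blast
qed

lemma bound_relax_alpha:
  fixes h t n K \<alpha> :: real
  assumes "t > 0" "n > 0" "K > 0" "0 < \<alpha>" "\<alpha> < 1"
    and "t * h \<le> n / 2 + n * K * t"
  shows "(1 - \<alpha>) * h \<le> n / (2 * (1 - \<alpha>) * t) + K * n / (2 * \<alpha>)"
proof -
  have "h \<le> n / (2 * t) + n * K" using assms by (simp add: field_simps)
  then have "(1 - \<alpha>) * h \<le> (1 - \<alpha>) * (n / (2 * t) + n * K)"
    using assms by (intro mult_left_mono) auto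
  also have "\<dots> = (1 - \<alpha>) * (n / (2 * t)) + (1 - \<alpha>) * (n * K)"
    by (simp add: distrib_left)
  also have "(1 - \<alpha>) * (n / (2 * t)) \<le> n / (2 * (1 - \<alpha>) * t)"
    using assms by (simp add: field_simps)
  also have "(1 - \<alpha>) * (n * K) \<le> K * n / (2 * \<alpha>)"
  proof -
    have "(1 - \<alpha>) * (2 * \<alpha>) \<le> 1" using sum_squares_ge_zero[of "2*\<alpha> - 1" 0]
      by (simp add: power2_eq_square algebra_simps)
    then have "(n * K) * ((1 - \<alpha>) * (2 * \<alpha>)) \<le> (n * K) * 1"
      using assms by (intro mult_left_mono) auto
    then have "(1 - \<alpha>) * (n * K) * (2 * \<alpha>) \<le> K * n"
      by (simp add: algebra_simps)
    then show ?thesis using assms by (simp add: pos_le_divide_eq)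
  qed
  finally show ?thesis by simp
qed

lemma riccati_bound_at_max:
  fixes H D \<Omega> t n K :: real
  assumes "H > 0" "t \<ge> 0" "n > 0"
    and "0 \<le> H + D * t" "D \<le> - \<Omega>" "(2 / n) * H\<^sup>2 - 2 * K * H \<le> \<Omega>"
  shows "t * H \<le> n / 2 + n * K * t"
proof -
  have "D * t \<le> (2 * K * H - (2 / n) * H\<^sup>2) * t"
    using assms by (intro mult_right_mono) auto
  with assms have "0 \<le> H + (2 * K * H - (2 / n) * H\<^sup>2) * t" by linarith
  also have "\<dots> = H * (1 + 2 * K * t - (2 / n) * (t * H))"
    by (simp add: power2_eq_square algebra_simps)
  finally have "(2 / n) * (t * H) \<le> 1 + 2 * K * t"
    using \<open>H > 0\<close> by (simp add: zero_le_mult_iff)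
  then have "(n / 2) * ((2 / n) * (t * H)) \<le> (n / 2) * (1 + 2 * K * t)"
    using \<open>n > 0\<close> by (intro mult_left_mono) auto
  then show ?thesis using \<open>n > 0\<close> by (simp add: algebra_simps)
qed

lemma weighted_graph_weight_pos: "weighted_graph V E w mu \<Longrightarrow> E x y \<Longrightarrow> w x y > 0"
  unfolding weighted_graph_def by blast

lemma weighted_graph_measure_pos: "weighted_graph V E w mu \<Longrightarrow> x \<in> V \<Longrightarrow> mu x > 0"
  unfolding weighted_graph_def by blast

lemma lap_const_diff: "lap V E w mu (\<lambda>y. a - h y) x = - lap V E w mu h x"
  unfolding lap_def minus_mult_right
  by (simp only: sum_negf[symmetric]) (rule arg_cong[where f = "(*) _"], rule sum.cong; simp add: algebra_simps)

lemma psi_bar_eq: "psi' 1 = 0 \<Longrightarrow> psi_bar psi psi' = (\<lambda>s. psi 1 - psi s)"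
  by (simp add: fun_eq_iff psi_bar_def)

lemma Gamma_psi_eq_neg_lap_psi:
  "psi' 1 = 0 \<Longrightarrow> Gamma_psi V E w mu psi psi' f x = - lap_psi V E w mu psi f x"
  unfolding Gamma_psi_def lap_psi_def by (simp add: psi_bar_eq lap_const_diff)

lemma Gamma_psi_eq_sum:
  "psi' 1 = 0 \<Longrightarrow> f x \<noteq> 0 \<Longrightarrow> Gamma_psi V E w mu psi psi' f x
    = (1 / mu x) * (\<Sum>y\<in>{y\<in>V. E x y}. w x y * (psi 1 - psi (f y / f x)))"
  unfolding Gamma_psi_def lap_psi_def lap_def by (simp add: psi_bar_eq)

lemma lap_mult_defect:
  "lap V E w mu f x * g x - lap V E w mu (\<lambda>y. f y * g y) x
    = (1 / mu x) * (\<Sum>y\<in>{y\<in>V. E x y}. w x y * f y * (g x - g y))"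
proof -
  let ?N = "{y\<in>V. E x y}"
  have "lap V E w mu f x * g x - lap V E w mu (\<lambda>y. f y * g y) x
      = (1 / mu x) * ((\<Sum>y\<in>?N. w x y * (f y - f x)) * g x - (\<Sum>y\<in>?N. w x y * (f y * g y - f x * g x)))"
    unfolding lap_def by (simp add: algebra_simps)
  also have "(\<Sum>y\<in>?N. w x y * (f y - f x)) * g x - (\<Sum>y\<in>?N. w x y * (f y * g y - f x * g x))
      = (\<Sum>y\<in>?N. w x y * f y * (g x - g y))"
    unfolding sum_distrib_right sum_subtractf[symmetric] by (rule sum.cong) (auto simp: algebra_simps)
  finally show ?thesis .
qed

lemma Omega_psi_ge_at_Gamma_max:
  assumes graph: "weighted_graph V E w mu" and x: "x \<in> V"
    and f_pos: "\<forall>y\<in>V. f y > 0" and CD: "CD_psi V E w mu psi psi' n (- K)"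
    and psi'_1: "psi' 1 = 0"
    and max: "\<forall>y\<in>V. Gamma_psi V E w mu psi psi' f y \<le> Gamma_psi V E w mu psi psi' f x"
  shows "(2 / n) * (Gamma_psi V E w mu psi psi' f x)\<^sup>2 - 2 * K * Gamma_psi V E w mu psi psi' f x
    \<le> Omega_psi V E w mu psi' f x"
proof -
  define L where "L = lap_psi V E w mu psi f"
  have G_eq: "Gamma_psi V E w mu psi psi' f y = - L y" for y
    unfolding L_def by (rule Gamma_psi_eq_neg_lap_psi[where psi' = psi', OF psi'_1])
  have "(\<Sum>y\<in>{y\<in>V. E x y}. w x y * f y * (L x - L y)) \<le> 0"
  proof (rule sum_nonpos)
    fix y assume y: "y \<in> {y\<in>V. E x y}"
    then have "0 < w x y * f y" using weighted_graph_weight_pos[OF graph] f_pos by simp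
    moreover have "L x - L y \<le> 0" using y max G_eq by force
    ultimately show "w x y * f y * (L x - L y) \<le> 0" by (metis less_imp_le mult_nonneg_nonpos)
  qed
  moreover have "0 < 1 / mu x" using weighted_graph_measure_pos[OF graph x] by simp
  ultimately have "lap V E w mu f x * L x - lap V E w mu (\<lambda>y. f y * L y) x \<le> 0"
    unfolding lap_mult_defect by (metis less_imp_le mult_nonneg_nonpos)
  then have "(lap V E w mu f x * L x - lap V E w mu (\<lambda>y. f y * L y) x) / f x \<le> 0"
    using f_pos x by (simp add: divide_nonpos_pos)
  then have "2 * Gamma2_psi V E w mu psi psi' f x \<le> Omega_psi V E w mu psi' f x"
    unfolding Gamma2_psi_def L_def by (simp add: diff_divide_distrib add_divide_distrib)
  moreover have "(1 / n) * (L x)\<^sup>2 + (- K) * Gamma_psi V E w mu psi psi' f x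
      \<le> Gamma2_psi V E w mu psi psi' f x"
    using CD f_pos x unfolding CD_psi_def L_def by blast
  moreover have "(2 / n) * (Gamma_psi V E w mu psi psi' f x)\<^sup>2 = 2 * ((1 / n) * (L x)\<^sup>2)"
    using G_eq[of x] by simp
  ultimately show ?thesis by linarith
qed

locale semilinear_heat_solution =
  fixes V :: "'v set" and E :: "'v \<Rightarrow> 'v \<Rightarrow> bool" and w :: "'v \<Rightarrow> 'v \<Rightarrow> real"
    and mu :: "'v \<Rightarrow> real" and psi psi' :: "real \<Rightarrow> real"
    and c :: "real \<Rightarrow> real" and \<sigma> :: real and u :: "'v \<Rightarrow> real \<Rightarrow> real"
  assumes graph: "weighted_graph V E w mu"
    and psi_deriv: "\<And>s. s > 0 \<Longrightarrow> (psi has_real_derivative psi' s) (at s)"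
    and psi_concave: "concave_on {0<..} psi"
    and psi'_1: "psi' 1 = 0"
    and c_sign: "((\<forall>t\<ge>0. c t \<ge> 0) \<and> \<sigma> \<le> 1) \<or> ((\<forall>t\<ge>0. c t \<le> 0) \<and> \<sigma> \<ge> 1)"
    and u_pos: "\<And>x t. x \<in> V \<Longrightarrow> t \<ge> 0 \<Longrightarrow> u x t > 0"
    and u_eq: "\<And>x t. x \<in> V \<Longrightarrow> t \<ge> 0 \<Longrightarrow>
       ((u x) has_real_derivative
          (lap V E w mu (\<lambda>y. u y t) x + c t * (u x t) powr \<sigma>)) (at t within {0..})"
begin

lemma psi'_reaction_nonneg:
  assumes a: "a > 0" and b: "b > 0" and t: "t \<ge> 0"
  shows "psi' (b / a) * (c t * (b powr \<sigma> * a - b * a powr \<sigma>)) \<ge> 0"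
proof -
  define X where "X = psi' (b / a)"
  define Y where "Y = c t * (b powr (\<sigma> - 1) - a powr (\<sigma> - 1))"
  have "(X - psi' 1) * (b / a - 1) * a \<le> 0"
    unfolding X_def using a b
    by (intro mult_nonpos_nonneg concave_on_deriv_antimono[OF psi_concave psi_deriv]) auto
  then have X_sign: "X * (b - a) \<le> 0"
    using a by (simp add: psi'_1 algebra_simps)
  have Y_sign: "Y * (b - a) \<le> 0"
    unfolding Y_def using reaction_rate_antimono[OF a b] c_sign t by auto
  have "X * Y \<ge> 0"
  proof (cases "b = a")
    case True
    then show ?thesis using a by (simp add: X_def psi'_1)
  next
    case False
    have "0 \<le> (X * (b - a)) * (Y * (b - a))" using X_sign Y_sign by (rule mult_nonpos_nonpos)
    also have "\<dots> = (X * Y) * (b - a)\<^sup>2" by (simp add: power2_eq_square algebra_simps)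
    finally show ?thesis using False by (simp add: zero_le_mult_iff)
  qed
  moreover have "b powr \<sigma> * a - b * a powr \<sigma> = a * b * (b powr (\<sigma> - 1) - a powr (\<sigma> - 1))"
    using a b by (simp add: powr_mult_base algebra_simps)
  then have "psi' (b / a) * (c t * (b powr \<sigma> * a - b * a powr \<sigma>)) = (a * b) * (X * Y)"
    unfolding X_def Y_def by (simp only: mult_ac)
  ultimately show ?thesis
    using a b by simp
qed

text \<open>The right-hand side is \<open>\<psi>'(b/a) \<partial>\<^sub>t(b/a)\<close> for \<open>b = u(y,t)\<close>, \<open>a = u(x,t)\<close>; the left-hand
  side is its diffusion part, the summand of \<open>\<Omega>\<^sup>\<psi>\<close>.\<close>

lemma psi'_ratio_rate_ge:
  assumes a: "a > 0" and b: "b > 0" and t: "t \<ge> 0"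
  shows "psi' (b / a) * (b / a) * (Lb / b - La / a)
    \<le> psi' (b / a) * (((Lb + c t * b powr \<sigma>) * a - b * (La + c t * a powr \<sigma>)) / (a * a))"
proof -
  have "psi' (b / a) * (((Lb + c t * b powr \<sigma>) * a - b * (La + c t * a powr \<sigma>)) / (a * a))
      = psi' (b / a) * (b / a) * (Lb / b - La / a)
        + psi' (b / a) * (c t * (b powr \<sigma> * a - b * a powr \<sigma>)) / (a * a)"
    using a b by (simp add: field_simps del: powr_diff)
  then show ?thesis using psi'_reaction_nonneg[OF a b t] by simp
qed

lemma Gamma_psi_solution_deriv:
  assumes x: "x \<in> V" and t: "t \<ge> 0"
  obtains D
  where "((\<lambda>s. Gamma_psi V E w mu psi psi' (\<lambda>y. u y s) x) has_real_derivative D) (at t within {0..})"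
    and "D \<le> - Omega_psi V E w mu psi' (\<lambda>y. u y t) x"
proof -
  let ?N = "{y\<in>V. E x y}"
  define f where "f = (\<lambda>y. u y t)"
  define r' where "r' = (\<lambda>y. ((lap V E w mu f y + c t * u y t powr \<sigma>) * u x t
      - u y t * (lap V E w mu f x + c t * u x t powr \<sigma>)) / (u x t * u x t))"
  define h where "h = (\<lambda>y. psi' (f y / f x) * (f y / f x) *
      (lap V E w mu f y / f y - lap V E w mu f x / f x))"
  define D where "D = (1 / mu x) * (\<Sum>y\<in>?N. w x y * (0 - psi' (u y t / u x t) * r' y))"
  have ux: "u x t > 0" using u_pos x t by auto
  have "((\<lambda>s. (1 / mu x) * (\<Sum>y\<in>?N. w x y * (psi 1 - psi (u y s / u x s))))
      has_real_derivative D) (at t within {0..})"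
    unfolding D_def
  proof (intro DERIV_cmult DERIV_sum DERIV_diff DERIV_const)
    fix y assume y: "y \<in> ?N"
    have "u y t / u x t > 0" using u_pos y t ux by auto
    moreover have "((\<lambda>s. u y s / u x s) has_real_derivative r' y) (at t within {0..})"
      unfolding r'_def f_def using y ux by (intro DERIV_divide u_eq x t) auto
    ultimately show "((\<lambda>s. psi (u y s / u x s)) has_real_derivative psi' (u y t / u x t) * r' y)
        (at t within {0..})"
      by (rule DERIV_chain2[OF psi_deriv])
  qed
  then have deriv: "((\<lambda>s. Gamma_psi V E w mu psi psi' (\<lambda>y. u y s) x) has_real_derivative D)
      (at t within {0..})"
    by (rule has_field_derivative_transform_within[where d = 1])
      (use t u_pos x in \<open>auto simp: Gamma_psi_eq_sum[where psi' = psi', OF psi'_1] less_imp_neq[symmetric]\<close>)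
  have "w x y * (0 - psi' (u y t / u x t) * r' y) \<le> - (w x y * (h y - h x))" if y: "y \<in> ?N" for y
  proof -
    have "h y \<le> psi' (u y t / u x t) * r' y"
      unfolding h_def r'_def f_def using psi'_ratio_rate_ge[OF ux _ t] u_pos y t by auto
    then have "w x y * h y \<le> w x y * (psi' (u y t / u x t) * r' y)"
      using weighted_graph_weight_pos[OF graph] y by (intro mult_left_mono) (auto simp: less_imp_le)
    moreover have "h x = 0" by (simp add: h_def)
    ultimately show ?thesis by (simp add: algebra_simps)
  qed
  then have "(\<Sum>y\<in>?N. w x y * (0 - psi' (u y t / u x t) * r' y))
      \<le> (\<Sum>y\<in>?N. - (w x y * (h y - h x)))"
    by (rule sum_mono)
  also have "\<dots> = - (\<Sum>y\<in>?N. w x y * (h y - h x))"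
    by (rule sum_negf)
  finally have "D \<le> (1 / mu x) * - (\<Sum>y\<in>?N. w x y * (h y - h x))"
    unfolding D_def using weighted_graph_measure_pos[OF graph x] by (intro mult_left_mono) auto
  also have "\<dots> = - Omega_psi V E w mu psi' f x"
    by (simp add: Omega_psi_def lap_def h_def)
  finally show ?thesis using that deriv unfolding f_def by blast
qed

lemma continuous_on_Gamma_psi_solution:
  assumes "x \<in> V"
  shows "continuous_on {0..} (\<lambda>s. Gamma_psi V E w mu psi psi' (\<lambda>y. u y s) x)"
  unfolding continuous_on_eq_continuous_within
proof
  fix t :: real assume "t \<in> {0..}"
  then obtain D where
    "((\<lambda>s. Gamma_psi V E w mu psi psi' (\<lambda>y. u y s) x) has_real_derivative D) (at t within {0..})"
    using Gamma_psi_solution_deriv[OF assms] by auto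
  then show "continuous (at t within {0..}) (\<lambda>s. Gamma_psi V E w mu psi psi' (\<lambda>y. u y s) x)"
    by (rule DERIV_continuous)
qed

lemma time_weighted_Gamma_psi_bound_at_max:
  assumes CD: "CD_psi V E w mu psi psi' n (- K)" and n: "n > 0" and K: "K \<ge> 0"
    and x: "x \<in> V" and t: "t \<ge> 0"
    and max: "\<And>y s. y \<in> V \<Longrightarrow> s \<in> {0..t} \<Longrightarrow>
      s * Gamma_psi V E w mu psi psi' (\<lambda>z. u z s) y \<le> t * Gamma_psi V E w mu psi psi' (\<lambda>z. u z t) x"
  shows "t * Gamma_psi V E w mu psi psi' (\<lambda>z. u z t) x \<le> n / 2 + n * K * t"
proof (cases "t > 0 \<and> Gamma_psi V E w mu psi psi' (\<lambda>z. u z t) x > 0")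
  case False
  then have "t * Gamma_psi V E w mu psi psi' (\<lambda>z. u z t) x \<le> 0"
    using t by (auto simp: mult_nonneg_nonpos)
  moreover have "0 \<le> n * K * t" using n K t by simp
  ultimately show ?thesis using n by linarith
next
  case True
  let ?G = "\<lambda>y s. Gamma_psi V E w mu psi psi' (\<lambda>z. u z s) y"
  have "\<forall>y\<in>V. ?G y t \<le> ?G x t"
  proof
    fix y assume "y \<in> V"
    then have "t * ?G y t \<le> t * ?G x t" using max t by simp
    then show "?G y t \<le> ?G x t" using True by (simp add: mult_le_cancel_left_pos)
  qed
  then have \<Omega>: "(2 / n) * (?G x t)\<^sup>2 - 2 * K * ?G x t \<le> Omega_psi V E w mu psi' (\<lambda>z. u z t) x"
    using Omega_psi_ge_at_Gamma_max[OF graph x _ CD psi'_1] u_pos t by auto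
  obtain D where D: "(?G x has_real_derivative D) (at t within {0..})"
    and D_le: "D \<le> - Omega_psi V E w mu psi' (\<lambda>z. u z t) x"
    using Gamma_psi_solution_deriv[OF x t] by auto
  have "((\<lambda>s. s * ?G x s) has_real_derivative 1 * ?G x t + D * t) (at t within {0..})"
    by (rule DERIV_mult[OF DERIV_ident D])
  then have "0 \<le> 1 * ?G x t + D * t"
    by (rule deriv_nonneg_at_left_max[where a = 0]) (use True max x in auto)
  then show ?thesis
    using riccati_bound_at_max[OF _ t n _ D_le \<Omega>] True by simp
qed

lemma time_weighted_Gamma_psi_bound:
  assumes fin: "finite V" and CD: "CD_psi V E w mu psi psi' n (- K)" and n: "n > 0" and K: "K \<ge> 0"
    and x: "x \<in> V" and T: "T > 0"
  shows "T * Gamma_psi V E w mu psi psi' (\<lambda>z. u z T) x \<le> n / 2 + n * K * T"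
proof -
  let ?F = "\<lambda>y s. s * Gamma_psi V E w mu psi psi' (\<lambda>z. u z s) y"
  have cont: "continuous_on {0..T} (?F y)" if "y \<in> V" for y
    using continuous_on_subset[OF continuous_on_Gamma_psi_solution[OF that]]
    by (intro continuous_on_mult continuous_on_id) auto
  obtain xm tm where xm: "xm \<in> V" and tm: "tm \<in> {0..T}"
    and max: "\<And>y s. y \<in> V \<Longrightarrow> s \<in> {0..T} \<Longrightarrow> ?F y s \<le> ?F xm tm"
    by (rule continuous_family_attains_max[of V 0 T ?F]) (use fin x T cont in auto)
  have "?F x T \<le> ?F xm tm" using max x T by auto
  also have "\<dots> \<le> n / 2 + n * K * tm"
    using time_weighted_Gamma_psi_bound_at_max[OF CD n K xm, of tm] max tm by auto
  also have "\<dots> \<le> n / 2 + n * K * T" using tm n K by (simp add: mult_left_mono)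
  finally show ?thesis .
qed

end

theorem mainTheorem12:
  fixes V :: "'v set" and E :: "'v \<Rightarrow> 'v \<Rightarrow> bool" and w :: "'v \<Rightarrow> 'v \<Rightarrow> real"
    and mu :: "'v \<Rightarrow> real" and psi psi' :: "real \<Rightarrow> real"
    and n K \<sigma> \<alpha> :: real and c :: "real \<Rightarrow> real" and u :: "'v \<Rightarrow> real \<Rightarrow> real"
  assumes graph: "weighted_graph V E w mu" and fin: "finite V"
    and n_pos: "n > 0" and K_pos: "K > 0"
    and psi_deriv: "\<And>s. s > 0 \<Longrightarrow> (psi has_real_derivative psi' s) (at s)"
    and psi'_cont: "continuous_on {0<..} psi'"
    and psi_concave: "concave_on {0<..} psi"
    and psi'_1: "psi' 1 = 0"
    and CD: "CD_psi V E w mu psi psi' n (- K)"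
    and c_cont: "continuous_on {0..} c"
    and c_sign: "((\<forall>t\<ge>0. c t \<ge> 0) \<and> \<sigma> \<le> 1) \<or> ((\<forall>t\<ge>0. c t \<le> 0) \<and> \<sigma> \<ge> 1)"
    and u_pos: "\<And>x t. x \<in> V \<Longrightarrow> t \<ge> 0 \<Longrightarrow> u x t > 0"
    and u_eq: "\<And>x t. x \<in> V \<Longrightarrow> t \<ge> 0 \<Longrightarrow>
       ((u x) has_real_derivative
          (lap V E w mu (\<lambda>y. u y t) x + c t * (u x t) powr \<sigma>)) (at t within {0..})"
    and alpha: "0 < \<alpha>" "\<alpha> < 1"
  shows "\<forall>x\<in>V. \<forall>t>0.
     (1 - \<alpha>) * Gamma_psi V E w mu psi psi' (\<lambda>y. u y t) x
       \<le> n / (2 * (1 - \<alpha>) * t) + K * n / (2 * \<alpha>)"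
proof (intro ballI allI impI)
  interpret semilinear_heat_solution V E w mu psi psi' c \<sigma> u
    using graph psi_deriv psi_concave psi'_1 c_sign u_pos u_eq by unfold_locales
  fix x t assume "x \<in> V" and t: "t > (0::real)"
  then have "t * Gamma_psi V E w mu psi psi' (\<lambda>y. u y t) x \<le> n / 2 + n * K * t"
    using time_weighted_Gamma_psi_bound[OF fin CD n_pos] K_pos by simp
  then show "(1 - \<alpha>) * Gamma_psi V E w mu psi psi' (\<lambda>y. u y t) x
      \<le> n / (2 * (1 - \<alpha>) * t) + K * n / (2 * \<alpha>)"
    by (rule bound_relax_alpha[OF t n_pos K_pos alpha])
qed

end
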